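(* Let $g(t)=\sum_{n\ge0}g_nt^n$ be a real formal power series with $g_0=1$ and $f(t)=\sum_{n\ge1}f_nt^n$ a real formal power series with $f_1\neq0$. Put $z_0=f_1$, $w_0=g_1$ and let \[ Z(t)=\frac{f(t)-z_0t\,g(t)}{f(t)}+z_0=\sum_{k\ge0}z_kt^k,\qquad W(t)=\frac{(1-w_0t)g(t)-1}{f(t)}+w_0=\sum_{k\ge0}w_kt^k . \] Let $J$ be the infinite matrix with $0$th column $(w_0,w_1,w_2,\dots)^T$, $1$st column $(z_0,z_1,z_2,\dots)^T$, entries $J_{i,i+1}=1$ for $i\ge1$, and all other entries $0$. If $J$ is totally positive, then the quasi-Riordan array $[g,f]$ is totally positive.
   Context: The quasi-Riordan array $[g,f]$ is the infinite lower triangular matrix $(r_{n,k})_{n,k\ge0}$ with $r_{n,0}=g_n$ and $r_{n,k}=f_{n-k+1}$ for $k\ge1$ (with $f_j=0$ for $j\le0$); its columns have generating functions $g,f,tf,t^2f,\dots$. The matrix $J$ is called the production matrix of $[g,f]$ (the data $A(t)=1$, $Z$, $W$ being the $A$-, $Z$-, $W$-sequences of $[g,f]$). An infinite matrix is totally positive (TP) if all its minors are nonnegative. *)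

theory Defs
  imports "HOL-Computational_Algebra.Formal_Power_Series" "Jordan_Normal_Form.Determinant"
begin

text \<open>Infinite matrices are functions nat => nat => real (row index first).
  A matrix is totally positive if every minor (rows r 0 < ... < r (k-1),
  columns c 0 < ... < c (k-1)) is nonnegative.\<close>

definition totally_positive :: "(nat \<Rightarrow> nat \<Rightarrow> real) \<Rightarrow> bool" where
  "totally_positive A \<longleftrightarrow>
     (\<forall>k (r::nat \<Rightarrow> nat) (c::nat \<Rightarrow> nat).
        strict_mono_on {..<k} r \<longrightarrow> strict_mono_on {..<k} c \<longrightarrow>
        det (mat k k (\<lambda>(i, j). A (r i) (c j))) \<ge> 0)"

definition quasi_riordan :: "real fps \<Rightarrow> real fps \<Rightarrow> nat \<Rightarrow> nat \<Rightarrow> real" where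
  "quasi_riordan g f n k =
     (if k = 0 then fps_nth g n else if k \<le> n + 1 then fps_nth f (n + 1 - k) else 0)"

definition Z_seq :: "real fps \<Rightarrow> real fps \<Rightarrow> real fps" where
  "Z_seq g f = (f - fps_const (fps_nth f 1) * fps_X * g) / f + fps_const (fps_nth f 1)"

definition W_seq :: "real fps \<Rightarrow> real fps \<Rightarrow> real fps" where
  "W_seq g f = ((1 - fps_const (fps_nth g 1) * fps_X) * g - 1) / f + fps_const (fps_nth g 1)"

definition prod_matrix :: "real fps \<Rightarrow> real fps \<Rightarrow> nat \<Rightarrow> nat \<Rightarrow> real" where
  "prod_matrix g f i j =
     (if j = 0 then fps_nth (W_seq g f) i
      else if j = 1 then fps_nth (Z_seq g f) i
      else if j = i + 1 then 1 else 0)"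

end

theory Submission
  imports Defs
begin

text \<open>Since f has order 1, the Z- and W-sequences are exactly what makes row n + 1 of R = [g, f]
  equal to row n of R times J (a finite sum, as row n of R vanishes beyond column n). Row 0 of R
  is the first unit vector. Hence a minor of R through row 0 either vanishes or is a smaller minor
  of R, and a minor avoiding row 0 is, by the Cauchy-Binet formula, a sum of products of minors of
  R with all row indices lowered by one and minors of J. Induction on the row indices then passes
  total positivity from J to R.\<close>

section \<open>Minors and the Cauchy-Binet formula\<close>

definition minor ::
    "(nat \<Rightarrow> nat \<Rightarrow> 'a::comm_ring_1) \<Rightarrow> nat \<Rightarrow> (nat \<Rightarrow> nat) \<Rightarrow> (nat \<Rightarrow> nat) \<Rightarrow> 'a" where
  "minor A k r c = det (mat k k (\<lambda>(i, j). A (r i) (c j)))"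

lemma totally_positive_iff_minor:
  "totally_positive A \<longleftrightarrow>
    (\<forall>k r c. strict_mono_on {..<k} r \<longrightarrow> strict_mono_on {..<k} c \<longrightarrow> 0 \<le> minor A k r c)"
  by (simp add: totally_positive_def minor_def)

lemma minor_cong:
  assumes "\<And>i j. i < k \<Longrightarrow> j < k \<Longrightarrow> A (r i) (c j) = B (r' i) (c' j)"
  shows "minor A k r c = minor B k r' c'"
  unfolding minor_def using assms by (intro arg_cong[where f = det] eq_matI) auto

lemma minor_0 [simp]: "minor A 0 r c = 1"
  by (simp add: minor_def det_def)

lemma minor_first_row_zero:
  assumes "\<And>j. j < Suc k \<Longrightarrow> A (r 0) (c j) = 0"
  shows "minor A (Suc k) r c = 0"
proof -
  let ?M = "mat (Suc k) (Suc k) (\<lambda>(i, j). A (r i) (c j))"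
  have "det ?M = (\<Sum>j<Suc k. ?M $$ (0, j) * cofactor ?M 0 j)"
    by (intro laplace_expansion_row) auto
  then show ?thesis using assms by (simp add: minor_def)
qed

lemma minor_first_row_unit:
  assumes "A (r 0) (c 0) = 1" and "\<And>j. 0 < j \<Longrightarrow> j < Suc k \<Longrightarrow> A (r 0) (c j) = 0"
  shows "minor A (Suc k) r c = minor A k (r \<circ> Suc) (c \<circ> Suc)"
proof -
  let ?M = "mat (Suc k) (Suc k) (\<lambda>(i, j). A (r i) (c j))"
  have "det ?M = (\<Sum>j<Suc k. ?M $$ (0, j) * cofactor ?M 0 j)"
    by (intro laplace_expansion_row) auto
  also have "\<dots> = cofactor ?M 0 0"
    using assms by (subst sum.remove[of _ 0]) auto
  also have "\<dots> = det (mat_delete ?M 0 0)"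
    by (simp add: cofactor_def)
  also have "mat_delete ?M 0 0 = mat k k (\<lambda>(i, j). A (r (Suc i)) (c (Suc j)))"
    by (rule eq_matI) (auto simp: mat_delete_def)
  finally show ?thesis by (simp add: minor_def)
qed

text \<open>The k-subsets of {..<m} as increasing enumerations; being the identity from k on makes
  the representation unique.\<close>

definition increasing_selections :: "nat \<Rightarrow> nat \<Rightarrow> (nat \<Rightarrow> nat) set" where
  "increasing_selections k m =
     {s. strict_mono_on {..<k} s \<and> (\<forall>i<k. s i < m) \<and> (\<forall>i\<ge>k. s i = i)}"

lemma sorted_list_of_set_image_strict_mono_on:
  assumes "strict_mono_on {..<k} (s :: nat \<Rightarrow> 'a::linorder)"
  shows "sorted_list_of_set (s ` {..<k}) = map s [0..<k]"
proof -
  have "inj_on s {..<k}" using assms by (rule strict_mono_on_imp_inj_on)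
  then show ?thesis
    using assms by (subst sorted_list_of_set_unique [symmetric])
      (auto simp: sorted_wrt_iff_nth_less card_image strict_mono_on_def)
qed

lemma strict_mono_on_image_eqD:
  assumes "strict_mono_on {..<k} (s :: nat \<Rightarrow> 'a::linorder)" "strict_mono_on {..<k} s'"
    and "s ` {..<k} = s' ` {..<k}" and "i < k"
  shows "s i = s' i"
proof -
  have "map s [0..<k] = map s' [0..<k]"
    using assms(1-3) sorted_list_of_set_image_strict_mono_on by metis
  then show ?thesis using \<open>i < k\<close> by (simp add: map_eq_conv)
qed

lemma strict_mono_on_minus_1:
  assumes "strict_mono_on A (r :: 'a::order \<Rightarrow> nat)" and "\<And>i. i \<in> A \<Longrightarrow> 0 < r i"
  shows "strict_mono_on A (\<lambda>i. r i - 1)"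
proof (rule strict_mono_onI)
  fix x y assume "x \<in> A" "y \<in> A" "x < y"
  then show "r x - 1 < r y - 1" using assms strict_mono_onD[OF assms(1)] by fastforce
qed

lemma comp_increasing_permutation_inj_on:
  "inj_on (\<lambda>(s, p). s \<circ> p) (increasing_selections k m \<times> {p. p permutes {0..<k}})"
proof (rule inj_onI, clarsimp)
  fix s p s' p'
  assume s: "s \<in> increasing_selections k m" and s': "s' \<in> increasing_selections k m"
    and p: "p permutes {0..<k}" and p': "p' permutes {0..<k}" and eq: "s \<circ> p = s' \<circ> p'"
  have "p ` {..<k} = {..<k}" "p' ` {..<k} = {..<k}"
    using permutes_image[OF p] permutes_image[OF p'] by (simp_all add: atLeast0LessThan)
  moreover have "s ` p ` {..<k} = s' ` p' ` {..<k}"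
    by (simp only: image_comp eq)
  ultimately have image_eq: "s ` {..<k} = s' ` {..<k}" by simp
  have ss': "s = s'"
  proof
    fix i
    show "s i = s' i"
    proof (cases "i < k")
      case True
      then show ?thesis using s s' image_eq
        by (intro strict_mono_on_image_eqD) (auto simp: increasing_selections_def)
    qed (use s s' in \<open>simp add: increasing_selections_def\<close>)
  qed
  have "p i = p' i" for i
  proof (cases "i < k")
    case True
    have "inj_on s {..<k}"
      using s strict_mono_on_imp_inj_on by (auto simp: increasing_selections_def)
    moreover have "s (p i) = s (p' i)"
      using fun_cong[OF eq, of i] ss' by simp
    moreover have "p i \<in> {..<k}" "p' i \<in> {..<k}"
      using True permutes_in_image[OF p] permutes_in_image[OF p'] by simp_all
    ultimately show ?thesis by (rule inj_onD)
  qed (use permutes_not_in[OF p] permutes_not_in[OF p'] in simp)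
  with ss' show "s = s' \<and> p = p'" by auto
qed

lemma inj_on_imp_increasing_comp_permutation:
  assumes "inj_on f {..<k}" and "\<forall>i<k. f i < m" and "\<forall>i\<ge>k. f i = i"
  obtains s p where "s \<in> increasing_selections k m" "p permutes {0..<k}" "f = s \<circ> p"
proof -
  define L where "L = sorted_list_of_set (f ` {..<k})"
  define s where "s i = (if i < k then L ! i else i)" for i
  have len: "length L = k" using assms(1) by (simp add: L_def card_image)
  have s_mono: "strict_mono_on {..<k} s"
    using len strict_sorted_list_of_set[of "f ` {..<k}"]
    by (auto simp: strict_mono_on_def s_def L_def sorted_wrt_iff_nth_less)
  have s_image: "s ` {..<k} = f ` {..<k}"
  proof -
    have "s ` {..<k} = set L" using len by (auto simp: s_def set_conv_nth)
    then show ?thesis by (simp add: L_def)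
  qed
  have "s \<in> increasing_selections k m"
    using s_mono s_image assms(2) by (force simp: increasing_selections_def s_def)
  have s_bij: "bij_betw s {..<k} (f ` {..<k})"
    using s_image strict_mono_on_imp_inj_on[OF s_mono] by (simp add: bij_betw_def)
  define p where "p i = (if i < k then the_inv_into {..<k} s (f i) else i)" for i
  have "bij_betw (the_inv_into {..<k} s \<circ> f) {..<k} {..<k}"
    using assms(1) bij_betw_the_inv_into[OF s_bij] by (intro bij_betw_trans) (auto simp: bij_betw_def)
  then have "bij_betw p {..<k} {..<k}"
    by (rule bij_betw_cong[THEN iffD1, rotated]) (simp add: p_def)
  then have "p permutes {0..<k}"
    by (intro bij_imp_permutes) (auto simp: p_def atLeast0LessThan)
  moreover have "f = s \<circ> p"
  proof
    fix i
    show "f i = (s \<circ> p) i"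
    proof (cases "i < k")
      case True
      then have "f i \<in> s ` {..<k}" using s_image by auto
      then show ?thesis
        using True strict_mono_on_imp_inj_on[OF s_mono] by (simp add: p_def f_the_inv_into_f)
    qed (simp add: assms(3) p_def s_def)
  qed
  ultimately show thesis using that \<open>s \<in> increasing_selections k m\<close> by blast
qed

lemma det_mat_sum_product_expand:
  fixes A B :: "nat \<Rightarrow> nat \<Rightarrow> 'a::comm_ring_1"
  shows "det (mat k k (\<lambda>(i, j). \<Sum>l<m. A i l * B l j)) =
    (\<Sum>f\<in>{f. (\<forall>i\<in>{0..<k}. f i \<in> {0..<m}) \<and> (\<forall>i. i \<notin> {0..<k} \<longrightarrow> f i = i)}.
       (\<Prod>i=0..<k. A i (f i)) * det (mat k k (\<lambda>(i, j). B (f i) j)))"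
proof -
  let ?F = "{f. (\<forall>i\<in>{0..<k}. f i \<in> {0..<m}) \<and> (\<forall>i. i \<notin> {0..<k} \<longrightarrow> f i = i)}"
  define b where "b l = vec k (B l)" for l
  have "mat k k (\<lambda>(i, j). \<Sum>l<m. A i l * B l j) =
      mat\<^sub>r k k (\<lambda>i. finsum_vec TYPE('a) k (\<lambda>l. A i l \<cdot>\<^sub>v b l) {0..<m})"
    by (rule eq_matI) (auto simp: b_def index_finsum_vec atLeast0LessThan)
  also have "det \<dots> = (\<Sum>f\<in>?F. det (mat\<^sub>r k k (\<lambda>i. A i (f i) \<cdot>\<^sub>v b (f i))))"
    by (rule det_linear_rows_sum) (auto simp: b_def)
  also have "\<dots> = (\<Sum>f\<in>?F. (\<Prod>i=0..<k. A i (f i)) * det (mat k k (\<lambda>(i, j). B (f i) j)))"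
  proof (rule sum.cong[OF refl])
    fix f
    have "mat\<^sub>r k k (\<lambda>i. b (f i)) = mat k k (\<lambda>(i, j). B (f i) j)"
      by (rule eq_matI) (auto simp: b_def)
    then show "det (mat\<^sub>r k k (\<lambda>i. A i (f i) \<cdot>\<^sub>v b (f i))) =
        (\<Prod>i=0..<k. A i (f i)) * det (mat k k (\<lambda>(i, j). B (f i) j))"
      by (subst det_rows_mul) (auto simp: b_def)
  qed
  finally show ?thesis .
qed

lemma det_mat_rows_not_inj:
  assumes "\<not> inj_on f {..<k}"
  shows "det (mat k k (\<lambda>(i, j). B (f i) j)) = 0"
proof -
  obtain i j where "i < k" "j < k" "i \<noteq> j" "f i = f j"
    using assms by (auto simp: inj_on_def)
  then show ?thesis
    by (intro det_identical_rows[of _ k i j]) (auto intro!: eq_vecI)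
qed

lemma sum_permutations_det_rows_comp:
  fixes A B :: "nat \<Rightarrow> nat \<Rightarrow> 'a::comm_ring_1"
  shows "(\<Sum>p | p permutes {0..<k}.
      (\<Prod>i=0..<k. A i (s (p i))) * det (mat k k (\<lambda>(i, j). B (s (p i)) j))) =
    det (mat k k (\<lambda>(i, j). A i (s j))) * det (mat k k (\<lambda>(i, j). B (s i) j))"
proof -
  let ?P = "{p. p permutes {0..<k}}" and ?Bs = "mat k k (\<lambda>(i, j). B (s i) j)"
  have "det (mat k k (\<lambda>(i, j). B (s (p i)) j)) = signof p * det ?Bs" if p: "p permutes {0..<k}" for p
  proof -
    have "mat k k (\<lambda>(i, j). B (s (p i)) j) = mat k k (\<lambda>(i, j). ?Bs $$ (p i, j))"
      using permutes_in_image[OF p] by (intro eq_matI) auto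
    then show ?thesis using det_permute_rows[of ?Bs k p] p by simp
  qed
  then have "(\<Sum>p\<in>?P. (\<Prod>i=0..<k. A i (s (p i))) * det (mat k k (\<lambda>(i, j). B (s (p i)) j))) =
      (\<Sum>p\<in>?P. signof p * (\<Prod>i=0..<k. A i (s (p i)))) * det ?Bs"
    by (simp add: sum_distrib_left sum_distrib_right mult_ac)
  also have "(\<Sum>p\<in>?P. signof p * (\<Prod>i=0..<k. A i (s (p i)))) = det (mat k k (\<lambda>(i, j). A i (s j)))"
    unfolding det_def'[OF mat_carrier]
    by (intro sum.cong refl arg_cong2[where f = "(*)"] prod.cong) (auto dest: permutes_in_image)
  finally show ?thesis .
qed

theorem Cauchy_Binet:
  fixes A B :: "nat \<Rightarrow> nat \<Rightarrow> 'a::comm_ring_1"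
  shows "det (mat k k (\<lambda>(i, j). \<Sum>l<m. A i l * B l j)) =
    (\<Sum>s\<in>increasing_selections k m.
       det (mat k k (\<lambda>(i, j). A i (s j))) * det (mat k k (\<lambda>(i, j). B (s i) j)))"
proof -
  let ?F = "{f. (\<forall>i\<in>{0..<k}. f i \<in> {0..<m}) \<and> (\<forall>i. i \<notin> {0..<k} \<longrightarrow> f i = i)}"
    and ?S = "increasing_selections k m" and ?P = "{p. p permutes {0..<k}}"
    and ?h = "\<lambda>(s, p). s \<circ> p :: nat \<Rightarrow> nat"
  define T where "T f = (\<Prod>i=0..<k. A i (f i)) * det (mat k k (\<lambda>(i, j). B (f i) j))" for f
  \<comment> \<open>non-injective index maps repeat a row of B; injective ones are increasing selections
    composed with permutations\<close>
  have h_image: "?h ` (?S \<times> ?P) \<subseteq> ?F"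
    by (auto simp: increasing_selections_def permutes_not_in dest: permutes_in_image)
  have not_inj: "\<not> inj_on f {..<k}" if f: "f \<in> ?F - ?h ` (?S \<times> ?P)" for f
  proof
    assume "inj_on f {..<k}"
    then obtain s p where "s \<in> ?S" "p permutes {0..<k}" "f = s \<circ> p"
      using f by (elim inj_on_imp_increasing_comp_permutation) auto
    then show False using f by force
  qed
  have T_vanishes: "T f = 0" if "f \<in> ?F - ?h ` (?S \<times> ?P)" for f
    using det_mat_rows_not_inj[OF not_inj[OF that], where B = B] by (simp add: T_def)
  have "det (mat k k (\<lambda>(i, j). \<Sum>l<m. A i l * B l j)) = (\<Sum>f\<in>?F. T f)"
    unfolding T_def by (rule det_mat_sum_product_expand)
  also have "\<dots> = (\<Sum>f\<in>?h ` (?S \<times> ?P). T f)"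
    using finite_bounded_functions[of "{0..<m}" "{0..<k}"] h_image T_vanishes
    by (intro sum.mono_neutral_right) auto
  also have "\<dots> = (\<Sum>(s, p)\<in>?S \<times> ?P. T (s \<circ> p))"
    by (subst sum.reindex[OF comp_increasing_permutation_inj_on]) (simp add: case_prod_beta)
  also have "\<dots> = (\<Sum>s\<in>?S. \<Sum>p\<in>?P. T (s \<circ> p))"
    by (rule sum.cartesian_product[symmetric])
  finally show ?thesis by (simp add: T_def sum_permutations_det_rows_comp)
qed

lemma minor_mult:
  "minor (\<lambda>i j. \<Sum>l<m. A i l * B l j) k r c =
    (\<Sum>s\<in>increasing_selections k m. minor A k r s * minor B k s c)"
  unfolding minor_def using Cauchy_Binet[where A = "\<lambda>i. A (r i)" and B = "\<lambda>l j. B l (c j)"] by simp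

section \<open>The production matrix of a quasi-Riordan array\<close>

lemma fps_mult_divide_cancel:
  fixes f a :: "'a::field fps"
  assumes "fps_nth f 0 = 0" "fps_nth f 1 \<noteq> 0" "fps_nth a 0 = 0"
  shows "f * (a / f) = a"
proof (cases "a = 0")
  case False
  have "subdegree f = 1" using assms by (intro subdegreeI) auto
  moreover have "f \<noteq> 0" using assms(2) by auto
  moreover have "subdegree a \<noteq> 0" using assms False by (simp add: subdegree_eq_0_iff)
  ultimately show ?thesis
    using fps_times_divide_eq[of f a] by (simp add: mult.commute)
qed simp

lemma fps_divide_nth_0_subdegree_1:
  fixes f a :: "'a::field fps"
  assumes "fps_nth f 0 = 0" "fps_nth f 1 \<noteq> 0" "fps_nth a 0 = 0"
  shows "fps_nth (a / f) 0 = fps_nth a 1 / fps_nth f 1"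
proof -
  have "fps_nth a 1 = fps_nth (f * (a / f)) 1" using fps_mult_divide_cancel[OF assms] by simp
  also have "\<dots> = fps_nth f 1 * fps_nth (a / f) 0" using assms(1) by (simp add: fps_mult_nth_1)
  finally show ?thesis using assms(2) by simp
qed

lemma quasi_riordan_row_times_series:
  assumes f0: "fps_nth f 0 = 0" and q0: "fps_nth q 0 = 0"
  shows "(\<Sum>l<Suc n. quasi_riordan g f n l * fps_nth (q + fps_const c) l) =
    fps_nth g n * c + fps_nth (f * q) (Suc n)"
proof -
  have "fps_nth (f * q) (Suc n) = (\<Sum>l\<le>Suc n. fps_nth q l * fps_nth f (Suc n - l))"
    by (simp add: mult.commute[of f] fps_mult_nth atLeast0AtMost)
  also have "\<dots> = (\<Sum>l<Suc n. fps_nth q l * fps_nth f (Suc n - l))"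
    using f0 by (simp add: lessThan_Suc_atMost[symmetric])
  finally have "fps_nth (f * q) (Suc n) = \<dots>" .
  moreover have "quasi_riordan g f n l * fps_nth (q + fps_const c) l =
      (if l = 0 then fps_nth g n * c else 0) + fps_nth q l * fps_nth f (Suc n - l)" if "l < Suc n" for l
    using that q0 by (auto simp: quasi_riordan_def)
  ultimately show ?thesis by (simp add: sum.distrib)
qed

lemma quasi_riordan_row_times_quotient:
  assumes f0: "fps_nth f 0 = 0" and f1: "fps_nth f 1 \<noteq> 0"
    and a0: "fps_nth a 0 = 0" and a1: "fps_nth a 1 = 0"
  shows "(\<Sum>l<Suc n. quasi_riordan g f n l * fps_nth (a / f + fps_const c) l) =
    fps_nth g n * c + fps_nth a (Suc n)"
proof -
  have q0: "fps_nth (a / f) 0 = 0" using fps_divide_nth_0_subdegree_1[OF f0 f1 a0] a1 by simp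
  show ?thesis
    unfolding quasi_riordan_row_times_series[OF f0 q0] fps_mult_divide_cancel[OF f0 f1 a0] ..
qed

lemma quasi_riordan_Suc_row:
  assumes g0: "fps_nth g 0 = 1" and f0: "fps_nth f 0 = 0" and f1: "fps_nth f 1 \<noteq> 0"
    and "n < m"
  shows "quasi_riordan g f (Suc n) j = (\<Sum>l<m. quasi_riordan g f n l * prod_matrix g f l j)"
proof -
  let ?R = "quasi_riordan g f" and ?J = "prod_matrix g f"
  have "(\<Sum>l<m. ?R n l * ?J l j) = (\<Sum>l<Suc n. ?R n l * ?J l j)"
    using \<open>n < m\<close> f0 by (intro sum.mono_neutral_right) (auto simp: quasi_riordan_def)
  also have "\<dots> = ?R (Suc n) j"
  proof -
    consider "j = 0" | "j = 1" | "j \<ge> 2" by linarith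
    then show ?thesis
    proof cases
      case 1
      define a where "a = (1 - fps_const (fps_nth g 1) * fps_X) * g - 1"
      have "(\<Sum>l<Suc n. ?R n l * ?J l j) =
          (\<Sum>l<Suc n. ?R n l * fps_nth (a / f + fps_const (fps_nth g 1)) l)"
        using 1 by (simp add: prod_matrix_def W_seq_def a_def)
      also have "\<dots> = fps_nth g n * fps_nth g 1 + fps_nth a (Suc n)"
        by (rule quasi_riordan_row_times_quotient[OF f0 f1]) (simp_all add: a_def g0)
      also have "\<dots> = ?R (Suc n) j"
        using 1 by (simp add: a_def quasi_riordan_def algebra_simps)
      finally show ?thesis .
    next
      case 2
      define a where "a = f - fps_const (fps_nth f 1) * fps_X * g"
      have "(\<Sum>l<Suc n. ?R n l * ?J l j) =
          (\<Sum>l<Suc n. ?R n l * fps_nth (a / f + fps_const (fps_nth f 1)) l)"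
        using 2 by (simp add: prod_matrix_def Z_seq_def a_def)
      also have "\<dots> = fps_nth g n * fps_nth f 1 + fps_nth a (Suc n)"
        by (rule quasi_riordan_row_times_quotient[OF f0 f1]) (simp_all add: a_def g0 f0)
      also have "\<dots> = ?R (Suc n) j"
        using 2 by (simp add: a_def quasi_riordan_def algebra_simps)
      finally show ?thesis .
    next
      case 3
      then have "(\<Sum>l<Suc n. ?R n l * ?J l j) = (\<Sum>l<Suc n. if l = j - 1 then ?R n l else 0)"
        by (intro sum.cong) (auto simp: prod_matrix_def)
      also have "\<dots> = ?R (Suc n) j"
        using 3 f0 by (auto simp: quasi_riordan_def Suc_diff_le)
      finally show ?thesis .
    qed
  qed
  finally show ?thesis ..
qed

lemma quasi_riordan_minor_first_row:
  assumes "fps_nth g 0 = 1" and "fps_nth f 0 = 0"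
    and "strict_mono_on {..<Suc k} c" and "r 0 = 0"
  shows "minor (quasi_riordan g f) (Suc k) r c =
    (if c 0 = 0 then minor (quasi_riordan g f) k (r \<circ> Suc) (c \<circ> Suc) else 0)"
proof -
  have first_row: "quasi_riordan g f (r 0) j = (if j = 0 then 1 else 0)" for j
    using assms(1,2,4) by (auto simp: quasi_riordan_def le_Suc_eq)
  have c_gt: "c 0 < c j" if "0 < j" "j < Suc k" for j
    using that assms(3) by (auto intro: strict_mono_onD)
  show ?thesis
  proof (cases "c 0 = 0")
    case True
    then show ?thesis using c_gt first_row by (simp add: minor_first_row_unit)
  next
    case False
    then have "c j \<noteq> 0" if "j < Suc k" for j
      using c_gt[of j] that by (cases "j = 0") auto
    then have "minor (quasi_riordan g f) (Suc k) r c = 0"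
      using first_row by (intro minor_first_row_zero) simp
    with False show ?thesis by simp
  qed
qed

lemma quasi_riordan_minor_Cauchy_Binet:
  assumes g0: "fps_nth g 0 = 1" and f0: "fps_nth f 0 = 0" and f1: "fps_nth f 1 \<noteq> 0"
    and r: "\<And>i. i < k \<Longrightarrow> 0 < r i \<and> r i \<le> m"
  shows "minor (quasi_riordan g f) k r c =
    (\<Sum>s\<in>increasing_selections k m.
       minor (quasi_riordan g f) k (\<lambda>i. r i - 1) s * minor (prod_matrix g f) k s c)"
proof -
  let ?R = "quasi_riordan g f"
  have "minor ?R k r c = minor (\<lambda>i j. \<Sum>l<m. ?R i l * prod_matrix g f l j) k (\<lambda>i. r i - 1) c"
  proof (rule minor_cong)
    fix i j assume "i < k"
    then have "r i = Suc (r i - 1)" "r i - 1 < m" using r by force+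
    then show "?R (r i) (c j) = (\<Sum>l<m. ?R (r i - 1) l * prod_matrix g f l (c j))"
      using quasi_riordan_Suc_row[OF g0 f0 f1] by metis
  qed
  then show ?thesis by (simp only: minor_mult)
qed

lemma quasi_riordan_minor_nonneg:
  assumes g0: "fps_nth g 0 = 1" and f0: "fps_nth f 0 = 0" and f1: "fps_nth f 1 \<noteq> 0"
    and J: "totally_positive (prod_matrix g f)"
    and "strict_mono_on {..<k} r" and "strict_mono_on {..<k} c"
  shows "0 \<le> minor (quasi_riordan g f) k r c"
  using assms(5,6)
  \<comment> \<open>the Suc makes deleting row 0 decrease the measure\<close>
proof (induction "\<Sum>i<k. Suc (r i)" arbitrary: k r c rule: less_induct)
  case less
  let ?R = "quasi_riordan g f"
  show ?case
  proof (cases k)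
    case (Suc k')
    show ?thesis
    proof (cases "r 0 = 0")
      case True
      have "0 \<le> minor ?R k' (r \<circ> Suc) (c \<circ> Suc)"
      proof (rule less.hyps)
        show "(\<Sum>i<k'. Suc ((r \<circ> Suc) i)) < (\<Sum>i<k. Suc (r i))"
          unfolding Suc sum.lessThan_Suc_shift by simp
        show "strict_mono_on {..<k'} (r \<circ> Suc)" "strict_mono_on {..<k'} (c \<circ> Suc)"
          using less.prems unfolding Suc by (auto simp: strict_mono_on_def)
      qed
      moreover note quasi_riordan_minor_first_row[where r = r, OF g0 f0,
          OF less.prems(2)[unfolded Suc] True]
      ultimately show ?thesis unfolding Suc by simp
    next
      case False
      then have r_bounds: "0 < r i \<and> r i \<le> r k'" if "i < k" for i
        using that strict_mono_on_leD[OF less.prems(1), of 0 i]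
          strict_mono_on_leD[OF less.prems(1), of i k'] unfolding Suc by auto
      have "0 \<le> minor ?R k (\<lambda>i. r i - 1) s * minor (prod_matrix g f) k s c"
        if "s \<in> increasing_selections k (r k')" for s
      proof (intro mult_nonneg_nonneg)
        have s: "strict_mono_on {..<k} s" using that by (simp add: increasing_selections_def)
        then show "0 \<le> minor (prod_matrix g f) k s c"
          using J less.prems(2) by (simp add: totally_positive_iff_minor)
        show "0 \<le> minor ?R k (\<lambda>i. r i - 1) s"
        proof (rule less.hyps[OF _ _ s])
          show "(\<Sum>i<k. Suc (r i - 1)) < (\<Sum>i<k. Suc (r i))"
            using r_bounds unfolding Suc by (intro sum_strict_mono) auto
          show "strict_mono_on {..<k} (\<lambda>i. r i - 1)"
            using less.prems(1) r_bounds by (intro strict_mono_on_minus_1) auto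
        qed
      qed
      then show ?thesis
        by (simp add: quasi_riordan_minor_Cauchy_Binet[OF g0 f0 f1 r_bounds] sum_nonneg)
    qed
  qed simp
qed

theorem theorem3p2:
  fixes g f :: "real fps"
  assumes "fps_nth g 0 = 1"
    and "fps_nth f 0 = 0"
    and "fps_nth f 1 \<noteq> 0"
    and "totally_positive (prod_matrix g f)"
  shows "totally_positive (quasi_riordan g f)"
  unfolding totally_positive_iff_minor using quasi_riordan_minor_nonneg[OF assms] by blast

end
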